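(* Let $T>0$, $\epsilon>0$, $x_0>0$, $L>0$ and let $\theta:[0,T]\to\mathbb R$ be measurable with $|\theta(t)|\le L$ on $[0,T]$. Let $X$ solve $X_t=x_0+\int_0^t\theta(s)X_sds+\epsilon Z^{q,H}_t$, $0\le t\le T$. Then $$P\Big(\inf_{0\le t\le T}X_t<\tfrac12 x_0e^{-LT}\Big)\le 4\,\epsilon^2\,x_0^{-2}\,e^{4LT}\,T^{2H}\,E\Big[\big(\sup_{0\le s\le1}|Z^{q,H}_s|\big)^2\Big].$$
   Context: Let $W=\{W(h),h\in L^2(\mathbb R)\}$ be a centered Gaussian family with $E[W(h)W(g)]=\langle h,g\rangle_{L^2(\mathbb R)}$. For an integer $q\ge1$ and $H\in(\frac12,1)$ set $H_0=1+\frac{H-1}{q}$, $c(q,H)=\sqrt{H(2H-1)/\big(q!\,\beta(H_0-\frac12,2-2H_0)^q\big)}$. The Hermite process of order $q$ and self-similarity parameter $H$ is the multiple Wiener–Itô integral $Z^{q,H}_t=c(q,H)\int_{\mathbb R^q}\big(\int_0^t\prod_{j=1}^q(s-\psi_j)_+^{H_0-3/2}ds\big)dW_{\psi_1}\cdots dW_{\psi_q}$; it is centered, $H$-self-similar, has stationary increments, covariance $\frac12(t^{2H}+s^{2H}-|t-s|^{2H})$, $Z^{q,H}_0=0$, and a version with continuous paths, which is used. The equation for $X$ is the SDE $dX_t=\theta(t)X_tdt+\epsilon dZ^{q,H}_t$, $X_0=x_0$, solved pathwise. *)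

theory Defs
  imports "HOL-Probability.Probability"
begin

definition hermite_type_process ::
  "'a measure \<Rightarrow> real \<Rightarrow> (real \<Rightarrow> 'a \<Rightarrow> real) \<Rightarrow> bool" where
  "hermite_type_process M H Z \<longleftrightarrow>
     prob_space M \<and>
     (\<forall>t. Z t \<in> borel_measurable M) \<and>
     (\<forall>\<omega>\<in>space M. Z 0 \<omega> = 0) \<and>
     (\<forall>\<omega>\<in>space M. continuous_on {0..} (\<lambda>t. Z t \<omega>)) \<and>
     (\<forall>t\<ge>0. integrable M (\<lambda>\<omega>. (Z t \<omega>)\<^sup>2) \<and> integral\<^sup>L M (Z t) = 0) \<and>
     (\<forall>s\<ge>0. \<forall>t\<ge>0. integral\<^sup>L M (\<lambda>\<omega>. Z s \<omega> * Z t \<omega>)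
          = (t powr (2*H) + s powr (2*H) - \<bar>t - s\<bar> powr (2*H)) / 2) \<and>
     (\<forall>c>0. \<forall>n. \<forall>ts::nat \<Rightarrow> real. (\<forall>i<n. ts i \<ge> 0) \<longrightarrow>
        distr M (Pi\<^sub>M {..<n} (\<lambda>_. borel)) (\<lambda>\<omega>. \<lambda>i\<in>{..<n}. Z (c * ts i) \<omega>)
        = distr M (Pi\<^sub>M {..<n} (\<lambda>_. borel)) (\<lambda>\<omega>. \<lambda>i\<in>{..<n}. c powr H * Z (ts i) \<omega>)) \<and>
     (\<forall>h\<ge>0. \<forall>n. \<forall>ts::nat \<Rightarrow> real. (\<forall>i<n. ts i \<ge> 0) \<longrightarrow>
        distr M (Pi\<^sub>M {..<n} (\<lambda>_. borel)) (\<lambda>\<omega>. \<lambda>i\<in>{..<n}. Z (ts i + h) \<omega> - Z h \<omega>)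
        = distr M (Pi\<^sub>M {..<n} (\<lambda>_. borel)) (\<lambda>\<omega>. \<lambda>i\<in>{..<n}. Z (ts i) \<omega>))"

end

theory Submission
  imports Defs
begin

text \<open>On each sample path the equation is a linear Volterra equation forced by \<open>\<epsilon> Z\<close>. The
  integrating factor \<open>E t = exp (\<integral>\<^sub>0\<^sup>t \<theta>)\<close> solves \<open>E = 1 + \<integral> \<theta> E\<close> and satisfies
  \<open>E t \<ge> exp (- L t)\<close>, while \<open>X - x0 E\<close> solves the homogeneous equation with the same forcing; so
  Gronwall's inequality gives \<open>\<bar>X t - x0 E t\<bar> \<le> \<epsilon> S T exp (L t)\<close>, where \<open>S c\<close> is the supremum of
  \<open>\<bar>Z\<bar>\<close> over \<open>[0, c]\<close>. Hence a path whose infimum lies below \<open>x0 exp (- L T) / 2\<close> has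
  \<open>S T > x0 exp (- 2 L T) / (2 \<epsilon>)\<close>. Markov's inequality for \<open>(S T)\<^sup>2\<close>, whose mean is \<open>T\<^sup>2\<^sup>H\<close>
  times that of \<open>(S 1)\<^sup>2\<close> by self-similarity, gives the bound.\<close>

section \<open>Exponential estimates and Gronwall's inequality\<close>

lemma exp_diff_bounds:
  fixes p q :: real
  shows "exp q * (p - q) \<le> exp p - exp q" and "exp p - exp q \<le> exp p * (p - q)"
proof -
  have lower: "exp y * (x - y) \<le> exp x - exp y" for x y :: real
  proof -
    have "exp y * (1 + (x - y)) \<le> exp y * exp (x - y)"
      by (intro mult_left_mono exp_ge_add_one_self) simp
    then show ?thesis by (simp add: exp_diff algebra_simps)
  qed
  show "exp q * (p - q) \<le> exp p - exp q" by (rule lower)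
  show "exp p - exp q \<le> exp p * (p - q)" using lower[where x = q and y = p] by (simp add: algebra_simps)
qed

lemma abs_exp_diff_le:
  fixes p q B :: real
  assumes "exp p \<le> B" "exp q \<le> B"
  shows "\<bar>exp p - exp q\<bar> \<le> B * \<bar>p - q\<bar>"
proof -
  have ordered: "\<bar>exp x - exp y\<bar> \<le> B * \<bar>x - y\<bar>" if "y \<le> x" "exp x \<le> B" for x y :: real
  proof -
    have "exp x - exp y \<le> exp x * (x - y)" by (rule exp_diff_bounds(2))
    also have "\<dots> \<le> B * (x - y)" using that by (intro mult_right_mono) auto
    finally show ?thesis using that by simp
  qed
  show ?thesis
  proof (cases "q \<le> p")
    case True
    then show ?thesis using ordered assms by blast
  next
    case False
    then show ?thesis using ordered[of p q] assms by (simp add: abs_minus_commute)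
  qed
qed

lemma abs_exp_diff_linear_le:
  fixes p q B :: real
  assumes "exp p \<le> B" "exp q \<le> B"
  shows "\<bar>exp p - exp q - exp q * (p - q)\<bar> \<le> B * (p - q)\<^sup>2"
proof -
  have "exp p - exp q - exp q * (p - q) \<le> (exp p - exp q) * (p - q)"
    using exp_diff_bounds(2)[where p = p and q = q] by (simp add: algebra_simps)
  also have "\<dots> \<le> \<bar>exp p - exp q\<bar> * \<bar>p - q\<bar>"
    by (simp add: abs_mult[symmetric])
  also have "\<dots> \<le> B * \<bar>p - q\<bar> * \<bar>p - q\<bar>"
    by (intro mult_right_mono abs_exp_diff_le assms) simp
  also have "\<dots> = B * (p - q)\<^sup>2"
    by (simp add: power2_eq_square mult.assoc)
  finally show ?thesis
    using exp_diff_bounds(1)[where p = p and q = q] by (simp add: abs_le_iff)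
qed

lemma abs_integral_le_real:
  fixes f :: "real \<Rightarrow> real"
  assumes "f integrable_on {a..b}" "a \<le> b" "\<And>s. s \<in> {a..b} \<Longrightarrow> \<bar>f s\<bar> \<le> B"
  shows "\<bar>integral {a..b} f\<bar> \<le> B * (b - a)"
proof -
  have "norm (integral {a..b} f) \<le> integral {a..b} (\<lambda>_. B)"
    by (rule integral_norm_bound_integral) (use assms in auto)
  then show ?thesis using assms(2) by (simp add: mult.commute)
qed

lemma constant_if_quadratic_increments:
  fixes G :: "real \<Rightarrow> real"
  assumes "convex S" and quad: "\<And>x y. x \<in> S \<Longrightarrow> y \<in> S \<Longrightarrow> \<bar>G y - G x\<bar> \<le> C * (y - x)\<^sup>2"
    and "x \<in> S" "y \<in> S"
  shows "G x = G y"
proof -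
  have "(G has_field_derivative 0) (at x within S)" if x: "x \<in> S" for x
  proof -
    have "((\<lambda>y. (G y - G x) / (y - x)) \<longlongrightarrow> 0) (at x within S)"
    proof (rule Lim_null_comparison)
      show "\<forall>\<^sub>F y in at x within S. norm ((G y - G x) / (y - x)) \<le> C * \<bar>y - x\<bar>"
        unfolding eventually_at_filter
      proof (intro always_eventually allI impI)
        fix y assume y: "y \<noteq> x" "y \<in> S"
        have "\<bar>G y - G x\<bar> \<le> C * \<bar>y - x\<bar> * \<bar>y - x\<bar>"
          using quad[OF x y(2)] by (simp add: power2_eq_square mult.assoc)
        then show "norm ((G y - G x) / (y - x)) \<le> C * \<bar>y - x\<bar>"
          using y by (simp add: divide_le_eq)
      qed
      show "((\<lambda>y. C * \<bar>y - x\<bar>) \<longlongrightarrow> 0) (at x within S)"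
        by (intro tendsto_eq_intros) auto
    qed
    then show ?thesis by (simp add: has_field_derivative_iff)
  qed
  then obtain c where "\<forall>x\<in>S. G x = c"
    using has_field_derivative_zero_constant[OF \<open>convex S\<close>] by blast
  then show ?thesis using assms(3,4) by simp
qed

lemma picard_majorant_has_integral:
  fixes L d K :: real and n :: nat
  assumes "0 \<le> s"
  shows "((\<lambda>r. L * (d * exp (L * r) + K * (L * r)^n / fact n)) has_integral
          d * exp (L * s) + K * (L * s)^Suc n / fact (Suc n) - d) {0..s}"
proof -
  define F where "F r = d * exp (L * r) + K * (L * r)^Suc n / fact (Suc n)" for r
  have "(F has_real_derivative L * (d * exp (L * r) + K * (L * r)^n / fact n)) (at r)" for r
  proof -
    have "((\<lambda>r. (L * r)^Suc n) has_real_derivative (1 + real n) * (L * (L * r)^n)) (at r)"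
      by (intro DERIV_power_Suc derivative_eq_intros) auto
    then have "(F has_real_derivative
        d * (exp (L * r) * L) + K * ((1 + real n) * (L * (L * r)^n)) / fact (Suc n)) (at r)"
      unfolding F_def by (intro derivative_eq_intros) auto
    moreover have "K * ((1 + real n) * (L * (L * r)^n)) / fact (Suc n) = L * (K * (L * r)^n / fact n)"
      by (simp add: divide_simps del: of_nat_Suc)
    ultimately show ?thesis by (simp add: algebra_simps)
  qed
  then have "((\<lambda>r. L * (d * exp (L * r) + K * (L * r)^n / fact n)) has_integral F s - F 0) {0..s}"
    by (intro fundamental_theorem_of_calculus[OF assms])
       (auto simp: has_real_derivative_iff_has_vector_derivative[symmetric]
             intro: has_field_derivative_at_within)
  then show ?thesis unfolding F_def by simp
qed

lemma gronwall_picard_iterate_bound: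
  fixes \<theta> D g :: "real \<Rightarrow> real"
  assumes int: "\<And>t. t \<in> {0..T} \<Longrightarrow> (\<lambda>s. \<theta> s * D s) integrable_on {0..t}"
    and eq: "\<And>t. t \<in> {0..T} \<Longrightarrow> D t = integral {0..t} (\<lambda>s. \<theta> s * D s) + g t"
    and \<theta>: "\<And>t. t \<in> {0..T} \<Longrightarrow> \<bar>\<theta> t\<bar> \<le> L"
    and g: "\<And>t. t \<in> {0..T} \<Longrightarrow> \<bar>g t\<bar> \<le> d"
    and K: "\<And>t. t \<in> {0..T} \<Longrightarrow> \<bar>D t\<bar> \<le> K"
    and d: "0 \<le> d" and "s \<in> {0..T}"
  shows "\<bar>D s\<bar> \<le> d * exp (L * s) + K * (L * s)^n / fact n"
  using \<open>s \<in> {0..T}\<close>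
proof (induction n arbitrary: s)
  case 0
  then show ?case using K[of s] d by (simp add: add_increasing)
next
  case (Suc n)
  have majorant: "((\<lambda>r. L * (d * exp (L * r) + K * (L * r)^n / fact n)) has_integral
      d * exp (L * s) + K * (L * s)^Suc n / fact (Suc n) - d) {0..s}"
    using Suc.prems by (intro picard_majorant_has_integral) auto
  have "\<bar>integral {0..s} (\<lambda>r. \<theta> r * D r)\<bar>
      \<le> integral {0..s} (\<lambda>r. L * (d * exp (L * r) + K * (L * r)^n / fact n))"
  proof (rule integral_norm_bound_integral[where 'a = real, simplified])
    show "(\<lambda>r. \<theta> r * D r) integrable_on {0..s}" using int Suc.prems .
    show "(\<lambda>r. L * (d * exp (L * r) + K * (L * r)^n / fact n)) integrable_on {0..s}"
      using majorant by blast
    fix r assume "r \<in> {0..s}"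
    then have r: "r \<in> {0..T}" using Suc.prems by auto
    show "\<bar>\<theta> r * D r\<bar> \<le> L * (d * exp (L * r) + K * (L * r)^n / fact n)"
      unfolding abs_mult using \<theta>[OF r] Suc.IH[OF r] by (intro mult_mono) auto
  qed
  also have "\<dots> = d * exp (L * s) + K * (L * s)^Suc n / fact (Suc n) - d"
    using majorant by (rule integral_unique)
  finally show ?case using eq[OF Suc.prems] g[OF Suc.prems] by linarith
qed

lemma gronwall_integral_equation:
  fixes \<theta> D g :: "real \<Rightarrow> real"
  assumes int: "\<And>t. t \<in> {0..T} \<Longrightarrow> (\<lambda>s. \<theta> s * D s) integrable_on {0..t}"
    and eq: "\<And>t. t \<in> {0..T} \<Longrightarrow> D t = integral {0..t} (\<lambda>s. \<theta> s * D s) + g t"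
    and \<theta>: "\<And>t. t \<in> {0..T} \<Longrightarrow> \<bar>\<theta> t\<bar> \<le> L"
    and g: "\<And>t. t \<in> {0..T} \<Longrightarrow> \<bar>g t\<bar> \<le> d"
    and t: "t \<in> {0..T}"
  shows "\<bar>D t\<bar> \<le> d * exp (L * t)"
proof -
  have "continuous_on {0..T} (\<lambda>t. integral {0..t} (\<lambda>s. \<theta> s * D s))"
    using int t by (intro indefinite_integral_continuous_1) auto
  then obtain K where K: "\<And>t. t \<in> {0..T} \<Longrightarrow> \<bar>integral {0..t} (\<lambda>s. \<theta> s * D s)\<bar> \<le> K"
    using compact_continuous_image[of "{0..T}"] compact_imp_bounded
    by (fastforce simp: bounded_iff)
  have D_bound: "\<bar>D s\<bar> \<le> K + d" if "s \<in> {0..T}" for s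
    using eq[OF that] K[OF that] g[OF that] by linarith
  have "(\<lambda>n. (L * t)^n / fact n) \<longlonglongrightarrow> 0"
    using summable_LIMSEQ_zero[OF summable_exp_generic[of "L * t"]] by (simp add: field_simps)
  then have "(\<lambda>n. d * exp (L * t) + (K + d) * ((L * t)^n / fact n)) \<longlonglongrightarrow> d * exp (L * t) + (K + d) * 0"
    by (intro tendsto_intros)
  moreover have "\<bar>D t\<bar> \<le> d * exp (L * t) + (K + d) * ((L * t)^n / fact n)" for n
    using gronwall_picard_iterate_bound[OF int eq \<theta> g D_bound _ t] g[OF t] by simp
  ultimately show ?thesis
    by (intro LIMSEQ_le_const) auto
qed

section \<open>Linear integral equations with a bounded measurable coefficient\<close>

lemma bounded_borel_absolutely_integrable_on:
  fixes \<theta> :: "real \<Rightarrow> real"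
  assumes "set_borel_measurable borel {a..b} \<theta>" "\<And>t. t \<in> {a..b} \<Longrightarrow> \<bar>\<theta> t\<bar> \<le> L"
  shows "\<theta> absolutely_integrable_on {a..b}"
proof (rule measurable_bounded_by_integrable_imp_absolutely_integrable[where g = "\<lambda>_. L"])
  have "(\<lambda>x. indicat_real {a..b} x *\<^sub>R \<theta> x) \<in> borel_measurable lborel"
    using assms(1) unfolding set_borel_measurable_def by simp
  then have "(\<lambda>x. indicat_real {a..b} x *\<^sub>R \<theta> x) \<in> borel_measurable lebesgue"
    by (rule measurable_completion)
  then show "\<theta> \<in> borel_measurable (lebesgue_on {a..b})"
    by (subst borel_measurable_restrict_space_iff) auto
qed (use assms(2) in auto)

lemma integral_initial_segment_diff:
  fixes f :: "real \<Rightarrow> real"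
  assumes "f integrable_on {c..b}" "c \<le> a" "a \<le> b"
  shows "integral {c..b} f - integral {c..a} f = integral {a..b} f"
  using Henstock_Kurzweil_Integration.integral_combine[OF assms(2,3,1)] by simp

definition integrating_factor :: "(real \<Rightarrow> real) \<Rightarrow> real \<Rightarrow> real" where
  "integrating_factor \<theta> t = exp (integral {0..t} \<theta>)"

context
  fixes \<theta> :: "real \<Rightarrow> real" and T L :: real
  assumes \<theta>_integrable: "\<theta> absolutely_integrable_on {0..T}"
    and \<theta>_bound: "\<And>s. s \<in> {0..T} \<Longrightarrow> \<bar>\<theta> s\<bar> \<le> L"
begin

lemma coefficient_integrable_on: "0 \<le> a \<Longrightarrow> b \<le> T \<Longrightarrow> \<theta> integrable_on {a..b}"
  using set_lebesgue_integral_eq_integral(1)[OF \<theta>_integrable]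
  by (rule integrable_on_subinterval) auto

lemma abs_integral_coefficient_diff_le:
  assumes "0 \<le> a" "a \<le> b" "b \<le> T"
  shows "\<bar>integral {0..b} \<theta> - integral {0..a} \<theta>\<bar> \<le> L * (b - a)"
proof -
  have "integral {0..b} \<theta> - integral {0..a} \<theta> = integral {a..b} \<theta>"
    using assms by (intro integral_initial_segment_diff coefficient_integrable_on) auto
  also have "\<bar>\<dots>\<bar> \<le> L * (b - a)"
    using assms by (intro abs_integral_le_real coefficient_integrable_on \<theta>_bound) auto
  finally show ?thesis .
qed

lemma integrating_factor_bounds:
  assumes "t \<in> {0..T}"
  shows "exp (- L * t) \<le> integrating_factor \<theta> t" "integrating_factor \<theta> t \<le> exp (L * t)"
  using abs_integral_coefficient_diff_le[of 0 t] assms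
  by (auto simp: integrating_factor_def abs_le_iff)

lemma continuous_on_integrating_factor: "continuous_on {0..T} (integrating_factor \<theta>)"
  unfolding integrating_factor_def
  by (intro continuous_intros indefinite_integral_continuous_1 coefficient_integrable_on) auto

lemma coefficient_times_integrating_factor_integrable_on:
  assumes "0 \<le> a" "b \<le> T"
  shows "(\<lambda>s. \<theta> s * integrating_factor \<theta> s) integrable_on {a..b}"
proof -
  have bounded: "bounded (integrating_factor \<theta> ` {0..T})"
    by (intro compact_imp_bounded compact_continuous_image continuous_on_integrating_factor) auto
  have "(\<lambda>s. integrating_factor \<theta> s * \<theta> s) absolutely_integrable_on {0..T}"
    by (intro absolutely_integrable_bounded_measurable_product_real bounded \<theta>_integrable
        continuous_imp_measurable_on_sets_lebesgue continuous_on_integrating_factor) auto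
  then have "(\<lambda>s. \<theta> s * integrating_factor \<theta> s) integrable_on {0..T}"
    by (simp add: mult.commute set_lebesgue_integral_eq_integral(1))
  then show ?thesis
    by (rule integrable_on_subinterval) (use assms in auto)
qed

lemma integrating_factor_le:
  assumes "t \<in> {0..T}"
  shows "integrating_factor \<theta> t \<le> exp (L * T)"
proof -
  have "0 \<le> L" using \<theta>_bound[of 0] assms by auto
  then have "exp (L * t) \<le> exp (L * T)" using assms by (simp add: mult_left_mono)
  then show ?thesis using integrating_factor_bounds(2)[OF assms] by linarith
qed

lemma abs_integrating_factor_diff_le:
  assumes "0 \<le> a" "a \<le> s" "s \<le> T"
  shows "\<bar>integrating_factor \<theta> s - integrating_factor \<theta> a\<bar> \<le> exp (L * T) * (L * (s - a))"
proof -
  have "\<bar>integrating_factor \<theta> s - integrating_factor \<theta> a\<bar>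
      \<le> exp (L * T) * \<bar>integral {0..s} \<theta> - integral {0..a} \<theta>\<bar>"
    using integrating_factor_le[of s] integrating_factor_le[of a] assms
    unfolding integrating_factor_def by (intro abs_exp_diff_le) auto
  also have "\<dots> \<le> exp (L * T) * (L * (s - a))"
    using abs_integral_coefficient_diff_le[OF assms] by (intro mult_left_mono) auto
  finally show ?thesis .
qed

text \<open>Since \<open>\<theta>\<close> is merely measurable, \<open>E' = \<theta> E\<close> for \<open>E = integrating_factor \<theta>\<close> is not
  available from the chain rule. Instead, the defect of the integral equation for \<open>E\<close> is shown to
  have quadratic increments, which forces it to be constant.\<close>

lemma integrating_factor_increment:
  assumes ab: "0 \<le> a" "a \<le> b" "b \<le> T"
  shows "\<bar>integrating_factor \<theta> b - integrating_factor \<theta> a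
           - integral {a..b} (\<lambda>s. \<theta> s * integrating_factor \<theta> s)\<bar>
         \<le> 2 * exp (L * T) * L\<^sup>2 * (b - a)\<^sup>2"
proof -
  define E where "E = integrating_factor \<theta>"
  define \<Theta> where "\<Theta> s = integral {0..s} \<theta>" for s
  define B where "B = exp (L * T)"
  have "0 \<le> L" using \<theta>_bound[of 0] ab by auto
  have linear_part: "\<bar>E b - E a - E a * (\<Theta> b - \<Theta> a)\<bar> \<le> B * (L * (b - a))\<^sup>2"
  proof -
    have "\<bar>E b - E a - E a * (\<Theta> b - \<Theta> a)\<bar> \<le> B * (\<Theta> b - \<Theta> a)\<^sup>2"
      using integrating_factor_le[of b] integrating_factor_le[of a] ab
      unfolding E_def B_def \<Theta>_def integrating_factor_def by (intro abs_exp_diff_linear_le) auto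
    also have "\<dots> \<le> B * (L * (b - a))\<^sup>2"
      using abs_integral_coefficient_diff_le[OF ab] ab \<open>0 \<le> L\<close> unfolding \<Theta>_def
      by (intro mult_left_mono power2_le_iff_abs_le[THEN iffD2]) (auto simp: B_def)
    finally show ?thesis .
  qed
  have \<theta>E: "(\<lambda>s. \<theta> s * E s) integrable_on {a..b}"
    unfolding E_def using ab by (intro coefficient_times_integrating_factor_integrable_on) auto
  have \<theta>: "(\<lambda>s. \<theta> s * E a) integrable_on {a..b}"
    using ab by (intro integrable_on_mult_left coefficient_integrable_on) auto
  have remainder: "\<bar>integral {a..b} (\<lambda>s. \<theta> s * (E s - E a))\<bar> \<le> L * (B * (L * (b - a))) * (b - a)"
  proof (rule abs_integral_le_real)
    show "(\<lambda>s. \<theta> s * (E s - E a)) integrable_on {a..b}"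
      using integrable_diff[OF \<theta>E \<theta>] by (simp add: algebra_simps)
    fix s assume s: "s \<in> {a..b}"
    have "\<bar>E s - E a\<bar> \<le> B * (L * (s - a))"
      using abs_integrating_factor_diff_le[of a s] s ab unfolding E_def B_def by auto
    also have "\<dots> \<le> B * (L * (b - a))"
      using s \<open>0 \<le> L\<close> by (intro mult_left_mono) (auto simp: B_def)
    finally have "\<bar>E s - E a\<bar> \<le> B * (L * (b - a))" .
    then show "\<bar>\<theta> s * (E s - E a)\<bar> \<le> L * (B * (L * (b - a)))"
      unfolding abs_mult using \<theta>_bound[of s] s ab by (intro mult_mono) auto
  qed (use ab in simp)
  have "integral {a..b} (\<lambda>s. \<theta> s * E s)
      = E a * (\<Theta> b - \<Theta> a) + integral {a..b} (\<lambda>s. \<theta> s * (E s - E a))"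
  proof -
    have "integral {a..b} (\<lambda>s. \<theta> s * (E s - E a))
        = integral {a..b} (\<lambda>s. \<theta> s * E s) - integral {a..b} \<theta> * E a"
      using integral_diff[OF \<theta>E \<theta>] by (simp add: algebra_simps)
    moreover have "\<Theta> b - \<Theta> a = integral {a..b} \<theta>"
      unfolding \<Theta>_def using ab by (intro integral_initial_segment_diff coefficient_integrable_on) auto
    ultimately show ?thesis by simp
  qed
  then have "\<bar>E b - E a - integral {a..b} (\<lambda>s. \<theta> s * E s)\<bar>
      \<le> B * (L * (b - a))\<^sup>2 + L * (B * (L * (b - a))) * (b - a)"
    using linear_part remainder by linarith
  also have "\<dots> = 2 * B * L\<^sup>2 * (b - a)\<^sup>2"
    by (simp add: power2_eq_square algebra_simps)
  finally show ?thesis unfolding E_def B_def .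
qed

lemma integrating_factor_integral_equation:
  assumes "t \<in> {0..T}"
  shows "integrating_factor \<theta> t = 1 + integral {0..t} (\<lambda>s. \<theta> s * integrating_factor \<theta> s)"
proof -
  define G where "G t = integrating_factor \<theta> t - integral {0..t} (\<lambda>s. \<theta> s * integrating_factor \<theta> s)" for t
  have "\<bar>G y - G x\<bar> \<le> 2 * exp (L * T) * L\<^sup>2 * (y - x)\<^sup>2" if "x \<in> {0..T}" "y \<in> {0..T}" for x y
  proof -
    have "\<bar>G b - G a\<bar> \<le> 2 * exp (L * T) * L\<^sup>2 * (b - a)\<^sup>2" if "0 \<le> a" "a \<le> b" "b \<le> T" for a b
      using integrating_factor_increment[OF that] that unfolding G_def
      by (subst (asm) integral_initial_segment_diff[symmetric, of _ 0])
         (auto intro: coefficient_times_integrating_factor_integrable_on simp: algebra_simps)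
    from this[of x y] this[of y x] that show ?thesis
      by (cases "x \<le> y") (auto simp: abs_minus_commute power2_commute)
  qed
  then have "G t = G 0"
    using assms by (intro constant_if_quadratic_increments[where S = "{0..T}"]) auto
  then show ?thesis by (simp add: G_def integrating_factor_def)
qed

lemma linear_integral_equation_lower_bound:
  fixes u g :: "real \<Rightarrow> real" and x0 d :: real
  assumes int: "\<And>t. t \<in> {0..T} \<Longrightarrow> (\<lambda>s. \<theta> s * u s) integrable_on {0..t}"
    and eq: "\<And>t. t \<in> {0..T} \<Longrightarrow> u t = x0 + integral {0..t} (\<lambda>s. \<theta> s * u s) + g t"
    and g: "\<And>t. t \<in> {0..T} \<Longrightarrow> \<bar>g t\<bar> \<le> d"
    and "0 \<le> x0" and t: "t \<in> {0..T}"
  shows "x0 * exp (- L * t) - d * exp (L * t) \<le> u t"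
proof -
  define E where "E = integrating_factor \<theta>"
  define D where "D s = u s - x0 * E s" for s
  have \<theta>E: "(\<lambda>r. \<theta> r * E r * x0) integrable_on {0..s}" if "s \<in> {0..T}" for s
    unfolding E_def using that
    by (intro integrable_on_mult_left coefficient_times_integrating_factor_integrable_on) auto
  have D_int: "(\<lambda>r. \<theta> r * D r) integrable_on {0..s}" if "s \<in> {0..T}" for s
    using integrable_diff[OF int \<theta>E, OF that that] by (simp add: D_def algebra_simps)
  have D_eq: "D s = integral {0..s} (\<lambda>r. \<theta> r * D r) + g s" if "s \<in> {0..T}" for s
  proof -
    have "integral {0..s} (\<lambda>r. \<theta> r * D r)
        = integral {0..s} (\<lambda>r. \<theta> r * u r) - integral {0..s} (\<lambda>r. \<theta> r * E r) * x0"
      using integral_diff[OF int \<theta>E, OF that that]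
      by (simp add: D_def algebra_simps)
    then show ?thesis
      using eq[OF that] integrating_factor_integral_equation[OF that]
      by (simp add: D_def E_def algebra_simps)
  qed
  have "\<bar>D t\<bar> \<le> d * exp (L * t)"
    by (rule gronwall_integral_equation[OF D_int D_eq \<theta>_bound g t])
  moreover have "x0 * exp (- L * t) \<le> x0 * E t"
    unfolding E_def using integrating_factor_bounds(1)[OF t] \<open>0 \<le> x0\<close> by (rule mult_left_mono)
  ultimately show ?thesis unfolding D_def by linarith
qed

lemma linear_integral_equation_small_INF_imp_large_forcing:
  fixes u g :: "real \<Rightarrow> real" and x0 d :: real
  assumes int: "\<And>t. t \<in> {0..T} \<Longrightarrow> (\<lambda>s. \<theta> s * u s) integrable_on {0..t}"
    and eq: "\<And>t. t \<in> {0..T} \<Longrightarrow> u t = x0 + integral {0..t} (\<lambda>s. \<theta> s * u s) + g t"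
    and g: "\<And>t. t \<in> {0..T} \<Longrightarrow> \<bar>g t\<bar> \<le> d"
    and "0 \<le> x0" "0 \<le> T"
    and small: "(INF t\<in>{0..T}. u t) < x0 / 2 * exp (- L * T)"
  shows "x0 / 2 * exp (- 2 * L * T) < d"
proof -
  have "0 \<le> L" "0 \<le> d" using \<theta>_bound[of 0] g[of 0] \<open>0 \<le> T\<close> by auto
  have "x0 * exp (- L * T) - d * exp (L * T) \<le> u t" if t: "t \<in> {0..T}" for t
  proof -
    have "x0 * exp (- L * T) \<le> x0 * exp (- L * t)" "d * exp (L * t) \<le> d * exp (L * T)"
      using t \<open>0 \<le> L\<close> \<open>0 \<le> d\<close> \<open>0 \<le> x0\<close> by (auto intro!: mult_left_mono)
    then show ?thesis
      using linear_integral_equation_lower_bound[OF int eq g \<open>0 \<le> x0\<close> t] by linarith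
  qed
  then have "x0 * exp (- L * T) - d * exp (L * T) \<le> (INF t\<in>{0..T}. u t)"
    using \<open>0 \<le> T\<close> by (intro cINF_greatest) auto
  with small have "x0 / 2 * exp (- L * T) < d * exp (L * T)" by linarith
  have "x0 / 2 * exp (- 2 * L * T) = x0 / 2 * exp (- L * T) * exp (- L * T)"
    by (simp add: mult.assoc flip: exp_add)
  also have "\<dots> < d * exp (L * T) * exp (- L * T)"
    using \<open>x0 / 2 * exp (- L * T) < d * exp (L * T)\<close> by (intro mult_strict_right_mono) auto
  also have "\<dots> = d"
    by (simp add: mult.assoc flip: exp_add)
  finally show ?thesis .
qed

end

section \<open>Suprema of continuous paths along dyadic grids\<close>

text \<open>Self-similarity only constrains finite-dimensional distributions; by path continuity the
  supremum of \<open>\<bar>Z\<bar>\<close> over \<open>[0, c]\<close> is the increasing limit of these grid maxima.\<close>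

definition dyadic_max :: "(real \<Rightarrow> real) \<Rightarrow> real \<Rightarrow> nat \<Rightarrow> real" where
  "dyadic_max f c n = Max ((\<lambda>i. \<bar>f (c * (real i / 2^n))\<bar>) ` {..2^n})"

lemma dyadic_max_ge:
  assumes "i \<le> 2^n"
  shows "\<bar>f (c * (real i / 2^n))\<bar> \<le> dyadic_max f c n"
  unfolding dyadic_max_def using assms by (intro Max_ge) auto

lemma dyadic_max_nonneg: "0 \<le> dyadic_max f c n"
  using dyadic_max_ge[of 0 n f c] by simp

lemma incseq_dyadic_max: "incseq (dyadic_max f c)"
proof (rule incseq_SucI)
  fix n
  have "\<bar>f (c * (real i / 2^n))\<bar> \<le> dyadic_max f c (Suc n)" if "i \<le> 2^n" for i
    using dyadic_max_ge[of "2 * i" "Suc n" f c] that by simp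
  then show "dyadic_max f c n \<le> dyadic_max f c (Suc n)"
    unfolding dyadic_max_def by (intro Max.boundedI) auto
qed

lemma dyadic_point_mem:
  assumes "i \<le> 2^n" "0 \<le> c"
  shows "c * (real i / 2^n) \<in> {0..c}"
proof -
  have "real i \<le> 2^n"
    using assms(1) by (metis of_nat_le_iff of_nat_numeral of_nat_power)
  then show ?thesis
    using assms(2) by (auto simp: field_simps mult_left_mono)
qed

lemma dyadic_max_le_SUP:
  assumes "0 \<le> c" "bdd_above ((\<lambda>s. \<bar>f s\<bar>) ` {0..c})"
  shows "dyadic_max f c n \<le> (SUP s\<in>{0..c}. \<bar>f s\<bar>)"
  unfolding dyadic_max_def
proof (intro Max.boundedI)
  fix y assume "y \<in> (\<lambda>i. \<bar>f (c * (real i / 2^n))\<bar>) ` {..2^n}"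
  then obtain i where "i \<le> 2^n" "y = \<bar>f (c * (real i / 2^n))\<bar>" by auto
  moreover have "c * (real i / 2^n) \<in> {0..c}"
    using \<open>i \<le> 2^n\<close> assms(1) by (rule dyadic_point_mem)
  ultimately show "y \<le> (SUP s\<in>{0..c}. \<bar>f s\<bar>)"
    using assms(2) by (auto intro: cSUP_upper)
qed auto

lemma dyadic_approximation:
  fixes s c :: real
  assumes "0 < c" "s \<in> {0..c}"
  obtains k :: "nat \<Rightarrow> nat" where "\<And>n. k n \<le> 2^n" "(\<lambda>n. c * (real (k n) / 2^n)) \<longlonglongrightarrow> s"
proof
  define k where "k n = nat \<lfloor>s / c * 2^n\<rfloor>" for n
  have s_c: "0 \<le> s / c" "s / c \<le> 1" using assms by auto
  have k_eq: "real (k n) = \<lfloor>s / c * 2^n\<rfloor>" for n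
    unfolding k_def using assms by (intro of_nat_nat) auto
  have k: "real (k n) \<le> s / c * 2^n" "s / c * 2^n < real (k n) + 1" for n
    unfolding k_eq by linarith+
  show "k n \<le> 2^n" for n
  proof -
    have "s / c * 2^n \<le> 1 * 2^n" using s_c(2) by (intro mult_right_mono) auto
    then have "real (k n) \<le> 2^n" using k(1)[of n] by linarith
    then show ?thesis by (metis of_nat_le_iff of_nat_numeral of_nat_power)
  qed
  show "(\<lambda>n. c * (real (k n) / 2^n)) \<longlonglongrightarrow> s"
  proof (rule tendsto_sandwich)
    show "\<forall>\<^sub>F n in sequentially. s - c / 2^n \<le> c * (real (k n) / 2^n)"
    proof (intro always_eventually allI)
      fix n
      have "s - c / 2^n = c * ((s / c * 2^n - 1) / 2^n)"
        using assms(1) by (simp add: field_simps)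
      also have "\<dots> \<le> c * (real (k n) / 2^n)"
        using k(2)[of n] assms(1) by (intro mult_left_mono divide_right_mono) auto
      finally show "s - c / 2^n \<le> c * (real (k n) / 2^n)" .
    qed
    show "\<forall>\<^sub>F n in sequentially. c * (real (k n) / 2^n) \<le> s"
    proof (intro always_eventually allI)
      fix n
      have "c * (real (k n) / 2^n) \<le> c * (s / c * 2^n / 2^n)"
        using k(1)[of n] assms(1) by (intro mult_left_mono divide_right_mono) auto
      then show "c * (real (k n) / 2^n) \<le> s"
        using assms(1) by simp
    qed
    have "(\<lambda>n. s - c * inverse (2^n)) \<longlonglongrightarrow> s - c * 0"
      by (intro tendsto_intros LIMSEQ_inverse_realpow_zero) auto
    then show "(\<lambda>n. s - c / 2^n) \<longlonglongrightarrow> s"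
      by (simp add: divide_inverse)
  qed simp
qed

lemma abs_le_SUP_continuous_on:
  fixes f :: "real \<Rightarrow> real"
  assumes "continuous_on {a..b} f" "t \<in> {a..b}"
  shows "\<bar>f t\<bar> \<le> (SUP s\<in>{a..b}. \<bar>f s\<bar>)"
  using assms
  by (intro cSUP_upper bounded_imp_bdd_above compact_imp_bounded compact_continuous_image
      continuous_intros) auto

lemma dyadic_max_tendsto_SUP:
  assumes "0 < c" and f: "continuous_on {0..c} f"
  shows "dyadic_max f c \<longlonglongrightarrow> (SUP s\<in>{0..c}. \<bar>f s\<bar>)"
proof -
  have bdd: "bdd_above ((\<lambda>s. \<bar>f s\<bar>) ` {0..c})"
    by (intro bounded_imp_bdd_above compact_imp_bounded compact_continuous_image
        continuous_intros f) auto
  have le: "dyadic_max f c n \<le> (SUP s\<in>{0..c}. \<bar>f s\<bar>)" for n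
    using assms(1) bdd by (intro dyadic_max_le_SUP) auto
  then have lim: "dyadic_max f c \<longlonglongrightarrow> (SUP n. dyadic_max f c n)"
    by (intro LIMSEQ_incseq_SUP incseq_dyadic_max) (auto simp: bdd_above_def)
  have "\<bar>f s\<bar> \<le> (SUP n. dyadic_max f c n)" if s: "s \<in> {0..c}" for s
  proof -
    obtain k where k: "\<And>n. k n \<le> 2^n" and to_s: "(\<lambda>n. c * (real (k n) / 2^n)) \<longlonglongrightarrow> s"
      using dyadic_approximation[OF assms(1) s] by blast
    have "c * (real (k n) / 2^n) \<in> {0..c}" for n
      using k[of n] assms(1) by (intro dyadic_point_mem) auto
    then have "(\<lambda>n. \<bar>f (c * (real (k n) / 2^n))\<bar>) \<longlonglongrightarrow> \<bar>f s\<bar>"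
      by (intro tendsto_rabs continuous_on_tendsto_compose[OF f to_s s]) auto
    then show ?thesis
      using lim by (rule LIMSEQ_le) (use dyadic_max_ge k in auto)
  qed
  then have "(SUP s\<in>{0..c}. \<bar>f s\<bar>) = (SUP n. dyadic_max f c n)"
    using le assms(1) by (intro antisym cSUP_least) auto
  then show ?thesis using lim by simp
qed

section \<open>Second moment of the running supremum\<close>

lemma hermite_type_process_measurable:
  assumes "hermite_type_process M H Z"
  shows "Z t \<in> borel_measurable M"
proof -
  have "\<forall>t. Z t \<in> borel_measurable M"
    using assms unfolding hermite_type_process_def by (elim conjE) assumption
  then show ?thesis ..
qed

lemma hermite_type_process_continuous_on:
  assumes "hermite_type_process M H Z" "\<omega> \<in> space M"
  shows "continuous_on {0..c} (\<lambda>t. Z t \<omega>)"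
proof -
  have "\<forall>\<omega>\<in>space M. continuous_on {0..} (\<lambda>t. Z t \<omega>)"
    using assms(1) unfolding hermite_type_process_def by (elim conjE) assumption
  then have "continuous_on {0..} (\<lambda>t. Z t \<omega>)"
    using assms(2) by (rule bspec)
  then show ?thesis
    by (rule continuous_on_subset) auto
qed

lemma hermite_type_process_self_similar:
  fixes ts :: "nat \<Rightarrow> real"
  assumes "hermite_type_process M H Z" "0 < c" "\<And>i. i < n \<Longrightarrow> 0 \<le> ts i"
  shows "distr M (Pi\<^sub>M {..<n} (\<lambda>_. borel)) (\<lambda>\<omega>. \<lambda>i\<in>{..<n}. Z (c * ts i) \<omega>)
       = distr M (Pi\<^sub>M {..<n} (\<lambda>_. borel)) (\<lambda>\<omega>. \<lambda>i\<in>{..<n}. c powr H * Z (ts i) \<omega>)"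
proof -
  have self_similar: "\<forall>c>0. \<forall>n. \<forall>ts::nat \<Rightarrow> real. (\<forall>i<n. ts i \<ge> 0) \<longrightarrow>
        distr M (Pi\<^sub>M {..<n} (\<lambda>_. borel)) (\<lambda>\<omega>. \<lambda>i\<in>{..<n}. Z (c * ts i) \<omega>)
        = distr M (Pi\<^sub>M {..<n} (\<lambda>_. borel)) (\<lambda>\<omega>. \<lambda>i\<in>{..<n}. c powr H * Z (ts i) \<omega>)"
    using assms(1) unfolding hermite_type_process_def by (elim conjE) assumption
  show ?thesis
    by (rule self_similar[rule_format, OF assms(2)]) (use assms(3) in auto)
qed
lemma borel_measurable_dyadic_max:
  assumes "\<And>t. Z t \<in> borel_measurable M"
  shows "(\<lambda>\<omega>. dyadic_max (\<lambda>s. Z s \<omega>) c n) \<in> borel_measurable M"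
  unfolding dyadic_max_def by (intro borel_measurable_Max borel_measurable_abs assms) auto

lemma nn_integral_dyadic_max_sq_scale:
  assumes Z: "hermite_type_process M H Z" and c: "0 < c"
  shows "(\<integral>\<^sup>+ \<omega>. ennreal ((dyadic_max (\<lambda>s. Z s \<omega>) c n)\<^sup>2) \<partial>M)
       = ennreal (c powr (2 * H)) * (\<integral>\<^sup>+ \<omega>. ennreal ((dyadic_max (\<lambda>s. Z s \<omega>) 1 n)\<^sup>2) \<partial>M)"
proof -
  define N where "N = Suc (2^n)"
  define P where "P = Pi\<^sub>M {..<N} (\<lambda>_. borel :: real measure)"
  define F where "F y = ennreal ((Max ((\<lambda>i. \<bar>y i\<bar>) ` {..<N}))\<^sup>2)" for y :: "nat \<Rightarrow> real"
  define Y where "Y b \<omega> = (\<lambda>i\<in>{..<N}. Z (b * (real i / 2^n)) \<omega>)" for b \<omega>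
  define Y' where "Y' \<omega> = (\<lambda>i\<in>{..<N}. c powr H * Z (real i / 2^n) \<omega>)" for \<omega>
  note Zm = hermite_type_process_measurable[OF Z]
  have F_meas: "F \<in> borel_measurable P" unfolding F_def P_def by measurable
  have Y_meas: "Y b \<in> M \<rightarrow>\<^sub>M P" for b unfolding Y_def P_def by (intro measurable_restrict Zm)
  have Y'_meas: "Y' \<in> M \<rightarrow>\<^sub>M P" unfolding Y'_def P_def
    by (intro measurable_restrict borel_measurable_times borel_measurable_const Zm)
  have same_distr: "distr M P (Y c) = distr M P Y'"
    unfolding Y_def Y'_def P_def by (intro hermite_type_process_self_similar[OF Z c]) auto
  have N: "{..<N} = {..2^n}" by (simp add: N_def lessThan_Suc_atMost)
  have F_Y: "F (Y b \<omega>) = ennreal ((dyadic_max (\<lambda>s. Z s \<omega>) b n)\<^sup>2)" for b \<omega>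
  proof -
    have "(\<lambda>i. \<bar>Y b \<omega> i\<bar>) ` {..<N} = (\<lambda>i. \<bar>Z (b * (real i / 2^n)) \<omega>\<bar>) ` {..2^n}"
      unfolding Y_def N by auto
    then show ?thesis by (simp add: F_def dyadic_max_def)
  qed
  have F_Y': "F (Y' \<omega>) = ennreal (c powr (2 * H)) * ennreal ((dyadic_max (\<lambda>s. Z s \<omega>) 1 n)\<^sup>2)" for \<omega>
  proof -
    let ?I = "(\<lambda>i. \<bar>Z (real i / 2^n) \<omega>\<bar>) ` {..2^n}"
    have "(\<lambda>i. \<bar>Y' \<omega> i\<bar>) ` {..<N} = (\<lambda>x. c powr H * x) ` ?I"
      unfolding Y'_def N by (auto simp: abs_mult image_image)
    moreover have "Max ((\<lambda>x. c powr H * x) ` ?I) = c powr H * Max ?I"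
    proof (rule mono_Max_commute[symmetric])
      show "mono (\<lambda>x. c powr H * x)" by (rule monoI) (simp add: mult_left_mono)
    qed auto
    moreover have "(c powr H * Max ?I)\<^sup>2 = c powr (2 * H) * (Max ?I)\<^sup>2"
    proof -
      have "(c powr H)\<^sup>2 = c powr (2 * H)" using c by (simp add: powr_power)
      then show ?thesis by (simp add: power_mult_distrib)
    qed
    ultimately show ?thesis
      unfolding F_def dyadic_max_def by (simp add: ennreal_mult)
  qed
  have "(\<integral>\<^sup>+ \<omega>. ennreal ((dyadic_max (\<lambda>s. Z s \<omega>) c n)\<^sup>2) \<partial>M) = (\<integral>\<^sup>+ \<omega>. F (Y c \<omega>) \<partial>M)"
    by (simp add: F_Y)
  also have "\<dots> = (\<integral>\<^sup>+ y. F y \<partial>distr M P (Y c))"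
    using Y_meas F_meas by (simp add: nn_integral_distr)
  also have "\<dots> = (\<integral>\<^sup>+ \<omega>. F (Y' \<omega>) \<partial>M)"
    using Y'_meas F_meas by (simp add: same_distr nn_integral_distr)
  also have "\<dots> = ennreal (c powr (2 * H)) * (\<integral>\<^sup>+ \<omega>. ennreal ((dyadic_max (\<lambda>s. Z s \<omega>) 1 n)\<^sup>2) \<partial>M)"
    unfolding F_Y' by (intro nn_integral_cmult measurable_compose[OF _ measurable_ennreal]
        borel_measurable_power borel_measurable_dyadic_max Zm)
  finally show ?thesis .
qed

lemma incseq_ennreal_dyadic_max_sq: "incseq (\<lambda>n. ennreal ((dyadic_max f c n)\<^sup>2))"
  using incseq_dyadic_max[of f c] dyadic_max_nonneg[of f c]
  by (auto simp: incseq_def intro!: ennreal_leI power_mono)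

lemma ennreal_sq_SUP_eq_SUP_dyadic_max:
  assumes "0 < c" "continuous_on {0..c} f"
  shows "ennreal ((SUP s\<in>{0..c}. \<bar>f s\<bar>)\<^sup>2) = (SUP n. ennreal ((dyadic_max f c n)\<^sup>2))"
proof -
  have "(\<lambda>n. ennreal ((dyadic_max f c n)\<^sup>2)) \<longlonglongrightarrow> ennreal ((SUP s\<in>{0..c}. \<bar>f s\<bar>)\<^sup>2)"
    using assms by (intro tendsto_ennrealI tendsto_power dyadic_max_tendsto_SUP)
  then show ?thesis
    using LIMSEQ_SUP[OF incseq_ennreal_dyadic_max_sq] by (rule LIMSEQ_unique)
qed

lemma borel_measurable_SUP_abs_path:
  assumes Z: "hermite_type_process M H Z" and "0 < c"
  shows "(\<lambda>\<omega>. SUP s\<in>{0..c}. \<bar>Z s \<omega>\<bar>) \<in> borel_measurable M"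
proof (rule borel_measurable_LIMSEQ_real)
  show "(\<lambda>n. dyadic_max (\<lambda>s. Z s \<omega>) c n) \<longlonglongrightarrow> (SUP s\<in>{0..c}. \<bar>Z s \<omega>\<bar>)" if "\<omega> \<in> space M" for \<omega>
    using assms(2) hermite_type_process_continuous_on[OF Z that] by (rule dyadic_max_tendsto_SUP)
  show "(\<lambda>\<omega>. dyadic_max (\<lambda>s. Z s \<omega>) c n) \<in> borel_measurable M" for n
    by (intro borel_measurable_dyadic_max hermite_type_process_measurable[OF Z])
qed

lemma nn_integral_sq_SUP_abs_eq_SUP_dyadic_max:
  assumes Z: "hermite_type_process M H Z" and "0 < c"
  shows "(\<integral>\<^sup>+ \<omega>. ennreal ((SUP s\<in>{0..c}. \<bar>Z s \<omega>\<bar>)\<^sup>2) \<partial>M)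
       = (SUP n. \<integral>\<^sup>+ \<omega>. ennreal ((dyadic_max (\<lambda>s. Z s \<omega>) c n)\<^sup>2) \<partial>M)"
proof -
  have "(\<integral>\<^sup>+ \<omega>. ennreal ((SUP s\<in>{0..c}. \<bar>Z s \<omega>\<bar>)\<^sup>2) \<partial>M)
      = (\<integral>\<^sup>+ \<omega>. (SUP n. ennreal ((dyadic_max (\<lambda>s. Z s \<omega>) c n)\<^sup>2)) \<partial>M)"
    using assms(2) hermite_type_process_continuous_on[OF Z]
    by (intro nn_integral_cong ennreal_sq_SUP_eq_SUP_dyadic_max)
  also have "\<dots> = (SUP n. \<integral>\<^sup>+ \<omega>. ennreal ((dyadic_max (\<lambda>s. Z s \<omega>) c n)\<^sup>2) \<partial>M)"
  proof (rule nn_integral_monotone_convergence_SUP)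
    show "incseq (\<lambda>n \<omega>. ennreal ((dyadic_max (\<lambda>s. Z s \<omega>) c n)\<^sup>2))"
      using incseq_ennreal_dyadic_max_sq by (auto simp: incseq_def le_fun_def)
    show "(\<lambda>\<omega>. ennreal ((dyadic_max (\<lambda>s. Z s \<omega>) c n)\<^sup>2)) \<in> borel_measurable M" for n
      by (intro measurable_compose[OF _ measurable_ennreal] borel_measurable_power
          borel_measurable_dyadic_max hermite_type_process_measurable[OF Z])
  qed
  finally show ?thesis .
qed

lemma nn_integral_sq_SUP_abs_scale:
  assumes Z: "hermite_type_process M H Z" and "0 < c"
  shows "(\<integral>\<^sup>+ \<omega>. ennreal ((SUP s\<in>{0..c}. \<bar>Z s \<omega>\<bar>)\<^sup>2) \<partial>M)
       = ennreal (c powr (2 * H)) * (\<integral>\<^sup>+ \<omega>. ennreal ((SUP s\<in>{0..1}. \<bar>Z s \<omega>\<bar>)\<^sup>2) \<partial>M)"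
proof -
  have "(\<integral>\<^sup>+ \<omega>. ennreal ((SUP s\<in>{0..c}. \<bar>Z s \<omega>\<bar>)\<^sup>2) \<partial>M)
      = (SUP n. ennreal (c powr (2 * H)) * \<integral>\<^sup>+ \<omega>. ennreal ((dyadic_max (\<lambda>s. Z s \<omega>) 1 n)\<^sup>2) \<partial>M)"
    by (simp add: nn_integral_sq_SUP_abs_eq_SUP_dyadic_max[OF assms]
        nn_integral_dyadic_max_sq_scale[OF assms])
  also have "\<dots> = ennreal (c powr (2 * H)) * (SUP n. \<integral>\<^sup>+ \<omega>. ennreal ((dyadic_max (\<lambda>s. Z s \<omega>) 1 n)\<^sup>2) \<partial>M)"
    by (rule SUP_mult_left_ennreal[symmetric])
  also have "(SUP n. \<integral>\<^sup>+ \<omega>. ennreal ((dyadic_max (\<lambda>s. Z s \<omega>) 1 n)\<^sup>2) \<partial>M)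
      = (\<integral>\<^sup>+ \<omega>. ennreal ((SUP s\<in>{0..1}. \<bar>Z s \<omega>\<bar>)\<^sup>2) \<partial>M)"
    by (rule nn_integral_sq_SUP_abs_eq_SUP_dyadic_max[OF Z, symmetric]) simp
  finally show ?thesis .
qed

lemma emeasure_ge_le_nn_integral_sq:
  fixes f :: "'a \<Rightarrow> real"
  assumes [measurable]: "f \<in> borel_measurable M" and "0 < a"
  shows "emeasure M {\<omega> \<in> space M. a \<le> f \<omega>} \<le> ennreal (1 / a\<^sup>2) * (\<integral>\<^sup>+ \<omega>. ennreal ((f \<omega>)\<^sup>2) \<partial>M)"
proof -
  have "emeasure M {\<omega> \<in> space M. a \<le> f \<omega>} = (\<integral>\<^sup>+ \<omega>. indicator {\<omega> \<in> space M. a \<le> f \<omega>} \<omega> \<partial>M)"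
    by simp
  also have "\<dots> \<le> (\<integral>\<^sup>+ \<omega>. ennreal (1 / a\<^sup>2) * ennreal ((f \<omega>)\<^sup>2) \<partial>M)"
  proof (intro nn_integral_mono)
    fix \<omega>
    have "1 \<le> ennreal (1 / a\<^sup>2) * ennreal ((f \<omega>)\<^sup>2)" if "a \<le> f \<omega>"
    proof -
      have "a\<^sup>2 \<le> (f \<omega>)\<^sup>2" using that \<open>0 < a\<close> by (intro power_mono) auto
      then have "1 \<le> 1 / a\<^sup>2 * (f \<omega>)\<^sup>2" using \<open>0 < a\<close> by (simp add: field_simps)
      then show ?thesis by (simp add: ennreal_mult[symmetric] ennreal_1[symmetric] del: ennreal_1)
    qed
    then show "indicator {\<omega> \<in> space M. a \<le> f \<omega>} \<omega> \<le> ennreal (1 / a\<^sup>2) * ennreal ((f \<omega>)\<^sup>2)"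
      by (auto split: split_indicator)
  qed
  also have "\<dots> = ennreal (1 / a\<^sup>2) * (\<integral>\<^sup>+ \<omega>. ennreal ((f \<omega>)\<^sup>2) \<partial>M)"
    by (rule nn_integral_cmult) measurable
  finally show ?thesis .
qed

theorem mainTheorem3:
  fixes M :: "'a measure" and Z X :: "real \<Rightarrow> 'a \<Rightarrow> real"
    and \<theta> :: "real \<Rightarrow> real" and q :: nat and H T \<epsilon> x0 L :: real
  assumes q: "q \<ge> 1" and H: "1/2 < H" "H < 1"
    and Z: "hermite_type_process M H Z"
    and T: "T > 0" and eps: "\<epsilon> > 0" and x0: "x0 > 0" and L: "L > 0"
    and theta_meas: "set_borel_measurable borel {0..T} \<theta>"
    and theta_bd: "\<And>t. t \<in> {0..T} \<Longrightarrow> \<bar>\<theta> t\<bar> \<le> L"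
    and X_rv: "\<And>t. t \<in> {0..T} \<Longrightarrow> X t \<in> borel_measurable M"
    and X_int: "\<And>\<omega> t. \<omega> \<in> space M \<Longrightarrow> t \<in> {0..T} \<Longrightarrow>
                   set_integrable lborel {0..t} (\<lambda>s. \<theta> s * X s \<omega>)"
    and X_eq: "\<And>\<omega> t. \<omega> \<in> space M \<Longrightarrow> t \<in> {0..T} \<Longrightarrow>
                   X t \<omega> = x0 + (LINT s:{0..t}|lborel. \<theta> s * X s \<omega>) + \<epsilon> * Z t \<omega>"
  shows "emeasure M {\<omega> \<in> space M. (INF t\<in>{0..T}. X t \<omega>) < x0 / 2 * exp (- L * T)}
         \<le> ennreal (4 * \<epsilon>\<^sup>2 * x0 powr (-2) * exp (4 * L * T) * T powr (2 * H))
            * (\<integral>\<^sup>+ \<omega>. ennreal ((SUP s\<in>{0..1}. \<bar>Z s \<omega>\<bar>)\<^sup>2) \<partial>M)"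
proof -
  have \<theta>: "\<theta> absolutely_integrable_on {0..T}"
    using theta_meas theta_bd by (rule bounded_borel_absolutely_integrable_on)
  define a where "a = x0 / 2 * exp (- 2 * L * T) / \<epsilon>"
  have "{\<omega> \<in> space M. (INF t\<in>{0..T}. X t \<omega>) < x0 / 2 * exp (- L * T)}
      \<subseteq> {\<omega> \<in> space M. a \<le> (SUP s\<in>{0..T}. \<bar>Z s \<omega>\<bar>)}"
  proof safe
    fix \<omega> assume \<omega>: "\<omega> \<in> space M" and small: "(INF t\<in>{0..T}. X t \<omega>) < x0 / 2 * exp (- L * T)"
    have "\<bar>\<epsilon> * Z t \<omega>\<bar> \<le> \<epsilon> * (SUP s\<in>{0..T}. \<bar>Z s \<omega>\<bar>)" if "t \<in> {0..T}" for t
      using abs_le_SUP_continuous_on[OF hermite_type_process_continuous_on[OF Z \<omega>] that] eps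
      by (simp add: abs_mult)
    then have "x0 / 2 * exp (- 2 * L * T) < \<epsilon> * (SUP s\<in>{0..T}. \<bar>Z s \<omega>\<bar>)"
      using set_borel_integral_eq_integral[OF X_int[OF \<omega>]] X_eq[OF \<omega>] x0 T small
      by (intro linear_integral_equation_small_INF_imp_large_forcing[OF \<theta> theta_bd,
            where u = "\<lambda>t. X t \<omega>"]) auto
    then show "a \<le> (SUP s\<in>{0..T}. \<bar>Z s \<omega>\<bar>)"
      using eps by (simp add: a_def field_simps)
  qed
  note S_meas[measurable] = borel_measurable_SUP_abs_path[OF Z T]
  have "emeasure M {\<omega> \<in> space M. (INF t\<in>{0..T}. X t \<omega>) < x0 / 2 * exp (- L * T)}
      \<le> emeasure M {\<omega> \<in> space M. a \<le> (SUP s\<in>{0..T}. \<bar>Z s \<omega>\<bar>)}"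
    by (intro emeasure_mono[OF \<open>_ \<subseteq> _\<close>]) measurable
  also have "\<dots> \<le> ennreal (1 / a\<^sup>2) * (\<integral>\<^sup>+ \<omega>. ennreal ((SUP s\<in>{0..T}. \<bar>Z s \<omega>\<bar>)\<^sup>2) \<partial>M)"
    using S_meas by (rule emeasure_ge_le_nn_integral_sq) (use x0 eps in \<open>simp add: a_def\<close>)
  also have "\<dots> = ennreal (1 / a\<^sup>2) * ennreal (T powr (2 * H))
                    * (\<integral>\<^sup>+ \<omega>. ennreal ((SUP s\<in>{0..1}. \<bar>Z s \<omega>\<bar>)\<^sup>2) \<partial>M)"
    by (simp add: nn_integral_sq_SUP_abs_scale[OF Z T] mult.assoc)
  also have "ennreal (1 / a\<^sup>2) * ennreal (T powr (2 * H))
      = ennreal (4 * \<epsilon>\<^sup>2 * x0 powr (-2) * exp (4 * L * T) * T powr (2 * H))"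
  proof -
    have "x0 powr (-2) = 1 / x0\<^sup>2" using x0 by (simp add: powr_minus_divide powr_realpow)
    moreover have "(exp (- 2 * L * T))\<^sup>2 * exp (4 * L * T) = 1"
      by (simp flip: exp_add exp_of_nat_mult add: power2_eq_square)
    ultimately have "1 / a\<^sup>2 = 4 * \<epsilon>\<^sup>2 * x0 powr (-2) * exp (4 * L * T)"
      unfolding a_def using x0 eps by (simp add: field_simps power2_eq_square)
    then show ?thesis by (simp add: ennreal_mult)
  qed
  finally show ?thesis .
qed

end
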